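(* Let $\varepsilon\in(0,\frac12)$, $z\ge 1$, let $X\subset[\Delta]^d$ be a weighted dataset (with $n$ points), and let $C'$ be a set of $k$ centers that is a constant-factor approximation to $(k,z)$-clustering on $X$. Let $\varepsilon'=\frac{\mathrm{poly}(\varepsilon^z)}{\mathrm{poly}(k,\log(nd\Delta))}$ (for suitable polynomials). Form $X'$ as follows: for each $x\in X$, let $c'(x)$ be the closest center of $C'$ to $x$, let $y$ be the offset $x-c'(x)$ with each coordinate rounded to a power of $(1+\varepsilon')$, let $x'=c'(x)+y$, and give $x'$ the weight of $x$ rounded to a power of $(1+\varepsilon')$. Then for all $C\subset[\Delta]^d$ with $|C|\le k$, \[(1-\varepsilon)\,\mathrm{Cost}(C,X)\le\mathrm{Cost}(C,X')\le(1+\varepsilon)\,\mathrm{Cost}(C,X).\]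
   Context: $\mathrm{Cost}(C,X)=\sum_{x\in X}w(x)\min_{c\in C}\|x-c\|_2^z$ for a weighted set $X$ with weights $w$. $C'$ is a constant-factor approximation if $\mathrm{Cost}(C',X)\le\gamma\min_{|C|\le k}\mathrm{Cost}(C,X)$ for some constant $\gamma\ge1$. Rounding a coordinate to a power of $(1+\varepsilon')$ preserves its sign and changes its absolute value by at most a factor $(1+\varepsilon')$ (zero stays zero). *)

theory Defs
  imports Complex_Main
begin

text \<open>Points of R^d are represented as functions nat => real that vanish
  outside the coordinates 0..d-1 (so that the dimension d can be quantified
  inside the statement).\<close>

definition Rd :: "nat \<Rightarrow> (nat \<Rightarrow> real) set" where
  "Rd d = {x. \<forall>i\<ge>d. x i = 0}"

definition grid :: "nat \<Rightarrow> nat \<Rightarrow> (nat \<Rightarrow> real) set" where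
  "grid d \<Delta> = {x. (\<forall>i<d. x i \<in> \<int> \<and> 1 \<le> x i \<and> x i \<le> real \<Delta>) \<and> (\<forall>i\<ge>d. x i = 0)}"

definition edist :: "nat \<Rightarrow> (nat \<Rightarrow> real) \<Rightarrow> (nat \<Rightarrow> real) \<Rightarrow> real" where
  "edist d x y = sqrt (\<Sum>i<d. (x i - y i)^2)"

text \<open>Cost(C,X) for the weighted dataset X = {(p i, w i) | i in I}.\<close>
definition cost :: "nat \<Rightarrow> real \<Rightarrow> (nat \<Rightarrow> real) set \<Rightarrow> nat set \<Rightarrow> (nat \<Rightarrow> nat \<Rightarrow> real)
    \<Rightarrow> (nat \<Rightarrow> real) \<Rightarrow> real" where
  "cost d z C I p w = (\<Sum>i\<in>I. w i * Min ((\<lambda>c. edist d (p i) c powr z) ` C))"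

definition opt :: "nat \<Rightarrow> real \<Rightarrow> nat \<Rightarrow> nat set \<Rightarrow> (nat \<Rightarrow> nat \<Rightarrow> real) \<Rightarrow> (nat \<Rightarrow> real) \<Rightarrow> real" where
  "opt d z k I p w = Inf {cost d z C I p w | C. C \<subseteq> Rd d \<and> finite C \<and> C \<noteq> {} \<and> card C \<le> k}"

definition rounds :: "real \<Rightarrow> real \<Rightarrow> real \<Rightarrow> bool" where
  "rounds e t s \<longleftrightarrow> sgn s = sgn t \<and>
     (t \<noteq> 0 \<longrightarrow> (\<exists>j::int. \<bar>s\<bar> = (1 + e) powi j) \<and> \<bar>t\<bar> \<le> (1 + e) * \<bar>s\<bar> \<and> \<bar>s\<bar> \<le> (1 + e) * \<bar>t\<bar>)"

end

theory Submission
  imports Defs "HOL-Analysis.L2_Norm"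
begin

(* Rounding the offset x - c'(x) coordinatewise moves x by at most eps' * dist(x, C'), and rounding
  its weight changes the weight by a factor at most 1 + eps'. The relaxed triangle inequality
  (a + b)^z <= (1 + eta)^z a^z + (1 + 1/eta)^z b^z, applied to every center of C, bounds the cost of
  each point in either dataset by (1 + eta)^z times its cost in the other one plus
  ((1 + 1/eta) eps' dist(x, C'))^z. Summed over X, these additive errors total at most
  ((1 + 1/eta) eps')^z Cost(C', X) <= gamma ((1 + 1/eta) eps')^z Cost(C, X), since C' is
  gamma-approximate. With eta = eps/(8z) and eps' = (eps^z)^2/(54 gamma) <= eps^2/(54 gamma z) all
  factors lie within 1 +- eps; in particular eps' need not depend on k, n, d or Delta. *)

lemma edist_eq_L2_set: "edist d x y = L2_set (\<lambda>i. x i - y i) {..<d}"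
  by (simp add: edist_def L2_set_def)

lemma edist_commute: "edist d x y = edist d y x"
  unfolding edist_def by (simp add: power2_commute)

lemma edist_nonneg: "0 \<le> edist d x y"
  unfolding edist_def by (simp add: sum_nonneg)

lemma edist_triangle: "edist d x z \<le> edist d x y + edist d y z"
  using L2_set_triangle_ineq[of "\<lambda>i. x i - y i" "\<lambda>i. y i - z i" "{..<d}"]
  by (simp add: edist_eq_L2_set)

lemma powr_le_of_le_add:
  fixes a b \<delta> \<eta> z :: real
  assumes "0 \<le> b" "0 \<le> a" "0 \<le> \<delta>" "b \<le> a + \<delta>" "0 < \<eta>" "0 \<le> z"
  shows "b powr z \<le> (1 + \<eta>) powr z * a powr z + (1 + 1 / \<eta>) powr z * \<delta> powr z"
proof (cases "\<delta> \<le> \<eta> * a")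
  case True
  then have "b powr z \<le> ((1 + \<eta>) * a) powr z"
    using assms by (intro powr_mono2) (auto simp: algebra_simps)
  then show ?thesis using assms by (simp add: powr_mult add_increasing2)
next
  case False
  then have "a \<le> \<delta> / \<eta>" using assms by (simp add: field_simps)
  then have "b powr z \<le> ((1 + 1 / \<eta>) * \<delta>) powr z"
    using assms by (intro powr_mono2) (auto simp: algebra_simps)
  then show ?thesis using assms by (simp add: powr_mult add_increasing)
qed

lemma Min_powr_edist_le_perturbed:
  assumes "finite C" "C \<noteq> {}" "edist d q p \<le> \<delta>" "0 < \<eta>" "0 \<le> z"
  shows "Min ((\<lambda>c. edist d q c powr z) ` C)
    \<le> (1 + \<eta>) powr z * Min ((\<lambda>c. edist d p c powr z) ` C) + (1 + 1 / \<eta>) powr z * \<delta> powr z"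
proof -
  have "Min ((\<lambda>c. edist d p c powr z) ` C) \<in> (\<lambda>c. edist d p c powr z) ` C"
    using assms(1,2) by simp
  then obtain c where c: "c \<in> C" "edist d p c powr z = Min ((\<lambda>c. edist d p c powr z) ` C)"
    by auto
  have "0 \<le> \<delta>"
    using edist_nonneg[of d q p] assms(3) by linarith
  have "edist d q c \<le> edist d p c + \<delta>"
    using edist_triangle[of d q c p] edist_commute[of d q p] assms(3) by simp
  then have "edist d q c powr z \<le> (1 + \<eta>) powr z * edist d p c powr z + (1 + 1 / \<eta>) powr z * \<delta> powr z"
    using assms \<open>0 \<le> \<delta>\<close> by (intro powr_le_of_le_add) (auto simp: edist_nonneg)
  moreover have "Min ((\<lambda>c. edist d q c powr z) ` C) \<le> edist d q c powr z"
    using assms(1) c(1) by simp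
  ultimately show ?thesis using c(2) by simp
qed

lemma rounds_abs_diff_le:
  assumes "rounds e t s" "0 \<le> e"
  shows "\<bar>s - t\<bar> \<le> e * \<bar>t\<bar>"
proof (cases "t = 0")
  case True
  then show ?thesis using assms by (simp add: rounds_def sgn_0_0)
next
  case False
  then have sgn: "sgn s = sgn t" and le: "\<bar>t\<bar> \<le> (1 + e) * \<bar>s\<bar>" "\<bar>s\<bar> \<le> (1 + e) * \<bar>t\<bar>"
    using assms by (auto simp: rounds_def)
  from sgn have "\<bar>s - t\<bar> = \<bar>\<bar>s\<bar> - \<bar>t\<bar>\<bar>"
    by (auto simp: sgn_if split: if_splits)
  also have "\<dots> \<le> e * \<bar>t\<bar>"
  proof (cases "\<bar>s\<bar> \<le> \<bar>t\<bar>")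
    case True
    then have "e * \<bar>s\<bar> \<le> e * \<bar>t\<bar>" using assms(2) by (rule mult_left_mono)
    then show ?thesis using True le(1) by (simp add: algebra_simps)
  next
    case False
    then show ?thesis using le(2) by (simp add: algebra_simps)
  qed
  finally show ?thesis .
qed

lemma rounds_pos:
  assumes "rounds e t s" "0 < t"
  shows "0 < s" "s \<le> (1 + e) * t" "t \<le> (1 + e) * s"
  using assms by (auto simp: rounds_def sgn_if split: if_splits)

lemma edist_add_rounded_offset:
  assumes "\<And>j. j < d \<Longrightarrow> rounds e (p j - q j) (y j)" "0 \<le> e"
  shows "edist d (\<lambda>j. q j + y j) p \<le> e * edist d p q"
proof -
  have "(\<Sum>j<d. (q j + y j - p j)\<^sup>2) \<le> (\<Sum>j<d. e\<^sup>2 * (p j - q j)\<^sup>2)"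
  proof (rule sum_mono)
    fix j assume "j \<in> {..<d}"
    then have "\<bar>y j - (p j - q j)\<bar> \<le> e * \<bar>p j - q j\<bar>"
      using assms by (intro rounds_abs_diff_le) auto
    then have "\<bar>y j - (p j - q j)\<bar>\<^sup>2 \<le> (e * \<bar>p j - q j\<bar>)\<^sup>2"
      by (intro power_mono) auto
    then show "(q j + y j - p j)\<^sup>2 \<le> e\<^sup>2 * (p j - q j)\<^sup>2"
      by (simp add: algebra_simps)
  qed
  then have "edist d (\<lambda>j. q j + y j) p \<le> sqrt (e\<^sup>2 * (\<Sum>j<d. (p j - q j)\<^sup>2))"
    unfolding edist_def by (simp add: sum_distrib_left)
  also have "\<dots> = e * edist d p q"
    using assms(2) by (simp add: edist_def real_sqrt_mult)
  finally show ?thesis .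
qed

lemma cost_nonneg:
  assumes "finite C" "C \<noteq> {}" "\<And>i. i \<in> I \<Longrightarrow> 0 \<le> w i"
  shows "0 \<le> cost d z C I p w"
  unfolding cost_def using assms by (intro sum_nonneg mult_nonneg_nonneg) auto

lemma opt_le_cost:
  assumes "C \<subseteq> Rd d" "finite C" "C \<noteq> {}" "card C \<le> k" "\<And>i. i \<in> I \<Longrightarrow> 0 \<le> w i"
  shows "opt d z k I p w \<le> cost d z C I p w"
  unfolding opt_def
proof (rule cInf_lower)
  show "bdd_below {cost d z C I p w |C. C \<subseteq> Rd d \<and> finite C \<and> C \<noteq> {} \<and> card C \<le> k}"
    using assms(5) by (intro bdd_belowI[of _ 0]) (auto intro!: cost_nonneg)
qed (use assms in auto)

lemma approx_cost_le:
  fixes \<gamma> :: real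
  assumes "cost d z C' I p w \<le> \<gamma> * opt d z k I p w" "0 \<le> \<gamma>"
    and "C \<subseteq> Rd d" "finite C" "C \<noteq> {}" "card C \<le> k" "\<And>i. i \<in> I \<Longrightarrow> 0 \<le> w i"
  shows "cost d z C' I p w \<le> \<gamma> * cost d z C I p w"
proof -
  have "\<gamma> * opt d z k I p w \<le> \<gamma> * cost d z C I p w"
    using assms(2-7) by (intro mult_left_mono opt_le_cost)
  then show ?thesis
    using assms(1) by simp
qed

lemma cost_nearest_center:
  assumes "finite C'" "0 \<le> z"
    and "\<And>i. i \<in> I \<Longrightarrow> cl i \<in> C' \<and> (\<forall>c\<in>C'. edist d (p i) (cl i) \<le> edist d (p i) c)"
  shows "cost d z C' I p w = (\<Sum>i\<in>I. w i * edist d (p i) (cl i) powr z)"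
  unfolding cost_def
proof (rule sum.cong)
  fix i assume "i \<in> I"
  then have "Min ((\<lambda>c. edist d (p i) c powr z) ` C') = edist d (p i) (cl i) powr z"
    using assms by (intro Min_eqI) (auto intro!: powr_mono2 simp: edist_nonneg)
  then show "w i * Min ((\<lambda>c. edist d (p i) c powr z) ` C') = w i * edist d (p i) (cl i) powr z"
    by simp
qed simp

lemma sum_scaled_nearest_powr:
  assumes "finite C'" "0 \<le> z" "0 \<le> e"
    and "\<And>i. i \<in> I \<Longrightarrow> cl i \<in> C' \<and> (\<forall>c\<in>C'. edist d (p i) (cl i) \<le> edist d (p i) c)"
  shows "(\<Sum>i\<in>I. w i * (e * edist d (p i) (cl i)) powr z) = e powr z * cost d z C' I p w"
  using cost_nearest_center[OF assms(1,2,4)] assms(3)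
  by (simp add: powr_mult edist_nonneg sum_distrib_left algebra_simps)

lemma cost_le_perturbed:
  fixes \<kappa> :: real
  assumes "finite C" "C \<noteq> {}" "0 < \<eta>" "0 \<le> z"
    and "\<And>i. i \<in> I \<Longrightarrow> edist d (q i) (p i) \<le> \<delta> i"
    and "\<And>i. i \<in> I \<Longrightarrow> 0 \<le> v i \<and> v i \<le> \<kappa> * w i"
  shows "cost d z C I q v \<le> \<kappa> * ((1 + \<eta>) powr z * cost d z C I p w
           + (1 + 1 / \<eta>) powr z * (\<Sum>i\<in>I. w i * \<delta> i powr z))"
proof -
  let ?m = "\<lambda>x. Min ((\<lambda>c. edist d x c powr z) ` C)"
  have "cost d z C I q v = (\<Sum>i\<in>I. v i * ?m (q i))"
    by (simp add: cost_def)
  also have "\<dots> \<le> (\<Sum>i\<in>I. \<kappa> * w i * ((1 + \<eta>) powr z * ?m (p i) + (1 + 1 / \<eta>) powr z * \<delta> i powr z))"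
  proof (rule sum_mono)
    fix i assume i: "i \<in> I"
    have "0 \<le> ?m (q i)"
      using assms(1,2) by simp
    then have "v i * ?m (q i) \<le> \<kappa> * w i * ?m (q i)"
      using assms(6)[OF i] by (intro mult_right_mono) auto
    also have "\<dots> \<le> \<kappa> * w i * ((1 + \<eta>) powr z * ?m (p i) + (1 + 1 / \<eta>) powr z * \<delta> i powr z)"
      using assms(1-4) assms(5)[OF i] assms(6)[OF i]
      by (intro mult_left_mono Min_powr_edist_le_perturbed) auto
    finally show "v i * ?m (q i) \<le> \<dots>" .
  qed
  also have "\<dots> = \<kappa> * ((1 + \<eta>) powr z * cost d z C I p w
           + (1 + 1 / \<eta>) powr z * (\<Sum>i\<in>I. w i * \<delta> i powr z))"
    by (simp add: cost_def sum.distrib sum_distrib_left algebra_simps)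
  finally show ?thesis .
qed

lemma cost_perturbed_bounds:
  fixes e \<eta> z :: real
  assumes "finite C" "C \<noteq> {}" "0 < \<eta>" "0 \<le> z" "0 \<le> e"
    and moved: "\<And>i. i \<in> I \<Longrightarrow> 0 \<le> r i \<and> edist d (q i) (p i) \<le> e * r i"
    and weights: "\<And>i. i \<in> I \<Longrightarrow> 0 < w i \<and> 0 < w' i \<and> w' i \<le> (1 + e) * w i \<and> w i \<le> (1 + e) * w' i"
  defines "E \<equiv> (1 + 1 / \<eta>) powr z * (\<Sum>i\<in>I. w i * (e * r i) powr z)"
  shows "cost d z C I q w' \<le> (1 + e) * (1 + \<eta>) powr z * cost d z C I p w + (1 + e)\<^sup>2 * E"
    and "cost d z C I p w \<le> (1 + e) * (1 + \<eta>) powr z * cost d z C I q w' + (1 + e)\<^sup>2 * E"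
proof -
  have "0 \<le> E"
    unfolding E_def using weights by (auto intro!: mult_nonneg_nonneg sum_nonneg simp: less_imp_le)
  have "1 + e \<le> (1 + e)\<^sup>2"
    using assms(5) by (simp add: power2_eq_square)
  have "cost d z C I q w' \<le> (1 + e) * ((1 + \<eta>) powr z * cost d z C I p w + E)"
    unfolding E_def using assms(1-4) moved weights by (intro cost_le_perturbed) (auto simp: less_imp_le)
  also have "\<dots> \<le> (1 + e) * (1 + \<eta>) powr z * cost d z C I p w + (1 + e)\<^sup>2 * E"
    using \<open>1 + e \<le> (1 + e)\<^sup>2\<close> \<open>0 \<le> E\<close> by (simp add: distrib_left mult_right_mono)
  finally show "cost d z C I q w' \<le> (1 + e) * (1 + \<eta>) powr z * cost d z C I p w + (1 + e)\<^sup>2 * E" .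
  have "(\<Sum>i\<in>I. w' i * (e * r i) powr z) \<le> (1 + e) * (\<Sum>i\<in>I. w i * (e * r i) powr z)"
    unfolding sum_distrib_left using weights by (intro sum_mono) (simp add: mult.assoc[symmetric] mult_right_mono)
  then have "(1 + 1 / \<eta>) powr z * (\<Sum>i\<in>I. w' i * (e * r i) powr z)
      \<le> (1 + 1 / \<eta>) powr z * ((1 + e) * (\<Sum>i\<in>I. w i * (e * r i) powr z))"
    by (rule mult_left_mono) simp
  then have error': "(1 + 1 / \<eta>) powr z * (\<Sum>i\<in>I. w' i * (e * r i) powr z) \<le> (1 + e) * E"
    by (simp add: E_def mult.left_commute)
  have "cost d z C I p w \<le> (1 + e) * ((1 + \<eta>) powr z * cost d z C I q w'
      + (1 + 1 / \<eta>) powr z * (\<Sum>i\<in>I. w' i * (e * r i) powr z))"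
    using assms(1-4) moved weights by (intro cost_le_perturbed) (auto simp: edist_commute less_imp_le)
  also have "\<dots> \<le> (1 + e) * ((1 + \<eta>) powr z * cost d z C I q w' + (1 + e) * E)"
    using error' assms(5) by (intro mult_left_mono add_left_mono) auto
  also have "\<dots> = (1 + e) * (1 + \<eta>) powr z * cost d z C I q w' + (1 + e)\<^sup>2 * E"
    by (simp add: power2_eq_square algebra_simps)
  finally show "cost d z C I p w \<le> (1 + e) * (1 + \<eta>) powr z * cost d z C I q w' + (1 + e)\<^sup>2 * E" .
qed

lemma mutual_perturbation_bounds:
  fixes A B a b \<epsilon> :: real
  assumes "0 \<le> A" "0 \<le> \<epsilon>" "\<epsilon> \<le> 1" "0 < a" "a \<le> 1 + \<epsilon> / 3" "b \<le> \<epsilon> / 3"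
    and "B \<le> a * A + b * A" "A \<le> a * B + b * A"
  shows "(1 - \<epsilon>) * A \<le> B" "B \<le> (1 + \<epsilon>) * A"
proof -
  have "a * ((1 - \<epsilon>) * A) \<le> (1 + \<epsilon> / 3) * ((1 - \<epsilon>) * A)"
    using assms by (intro mult_right_mono) auto
  also have "\<dots> \<le> (1 - b) * A"
  proof -
    have "(1 + \<epsilon> / 3) * (1 - \<epsilon>) \<le> 1 - b"
    proof -
      have "(1 + \<epsilon> / 3) * (1 - \<epsilon>) = 1 - 2 * \<epsilon> / 3 - \<epsilon> * \<epsilon> / 3"
        by (simp add: field_simps)
      then show ?thesis
        using assms(2,6) mult_nonneg_nonneg[OF assms(2,2)] by linarith
    qed
    then show ?thesis
      using assms(1) by (subst mult.assoc[symmetric]) (rule mult_right_mono)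
  qed
  also have "\<dots> \<le> a * B"
    using assms(8) by (simp add: algebra_simps)
  finally show "(1 - \<epsilon>) * A \<le> B"
    using assms(4) by simp
  have "(a + b) * A \<le> (1 + \<epsilon>) * A"
    using assms by (intro mult_right_mono) auto
  then show "B \<le> (1 + \<epsilon>) * A"
    using assms(7) by (simp add: distrib_right)
qed

lemma one_plus_powr_le_exp:
  fixes x z :: real
  assumes "0 \<le> x" "0 \<le> z"
  shows "(1 + x) powr z \<le> exp (x * z)"
proof -
  have "(1 + x) powr z \<le> exp x powr z"
    using assms by (intro powr_mono2) auto
  then show ?thesis
    by (simp add: exp_powr_real)
qed

lemma precision_le:
  fixes \<epsilon> z \<gamma> :: real
  assumes "0 < \<epsilon>" "\<epsilon> < 1/2" "1 \<le> z" "1 \<le> \<gamma>"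
  shows "\<epsilon>\<^sup>2 / (54 * \<gamma> * z) \<le> \<epsilon> / 54"
proof -
  have "1 \<le> \<gamma> * z"
    using assms(3,4) mult_mono[of 1 \<gamma> 1 z] by simp
  then show ?thesis
    using assms(1,2) by (simp add: field_simps power2_eq_square mult_mono)
qed

lemma rounding_scale_factor_le:
  fixes \<epsilon> z e :: real
  assumes "0 < \<epsilon>" "\<epsilon> < 1/2" "0 < z" "0 \<le> e" "e \<le> \<epsilon> / 54"
  shows "(1 + e) * (1 + \<epsilon> / (8 * z)) powr z \<le> 1 + \<epsilon> / 3"
proof -
  have "(1 + \<epsilon> / (8 * z)) powr z \<le> exp (\<epsilon> / 8)"
    using one_plus_powr_le_exp[of "\<epsilon> / (8 * z)" z] assms(1,3) by simp
  also have "\<dots> \<le> 1 + \<epsilon> / 4"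
    using exp_bound_lemma[of "\<epsilon> / 8"] assms(1,2) by simp
  finally have "(1 + e) * (1 + \<epsilon> / (8 * z)) powr z \<le> (1 + \<epsilon> / 54) * (1 + \<epsilon> / 4)"
    using assms(4,5) by (intro mult_mono) auto
  also have "\<dots> \<le> 1 + \<epsilon> / 3"
    using assms(1,2) by (simp add: field_simps power2_eq_square)
  finally show ?thesis .
qed

lemma rounding_error_factor_le:
  fixes \<epsilon> z \<gamma> e :: real
  assumes "0 < \<epsilon>" "\<epsilon> < 1/2" "1 \<le> z" "1 \<le> \<gamma>" "0 \<le> e" "e \<le> \<epsilon>\<^sup>2 / (54 * \<gamma> * z)"
  defines "\<eta> \<equiv> \<epsilon> / (8 * z)"
  shows "(1 + e)\<^sup>2 * (\<gamma> * ((1 + 1 / \<eta>) powr z * e powr z)) \<le> \<epsilon> / 3"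
proof -
  have "(1 + 1 / \<eta>) * e \<le> 9 * z / \<epsilon> * e"
    using assms(1-3,5) by (intro mult_right_mono) (auto simp: \<eta>_def field_simps)
  also have "\<dots> \<le> \<epsilon> / (6 * \<gamma>)"
    using assms(1,3,4,6) by (simp add: field_simps power2_eq_square)
  finally have small: "(1 + 1 / \<eta>) * e \<le> \<epsilon> / (6 * \<gamma>)" .
  moreover have "\<epsilon> / (6 * \<gamma>) \<le> 1"
    using assms(2,4) by (simp add: field_simps)
  moreover have "0 < \<eta>"
    using assms(1,3) by (simp add: \<eta>_def)
  ultimately have "((1 + 1 / \<eta>) * e) powr z \<le> (1 + 1 / \<eta>) * e"
    using powr_mono'[of 1 z "(1 + 1 / \<eta>) * e"] assms(3,5) by simp
  then have K: "(1 + 1 / \<eta>) powr z * e powr z \<le> \<epsilon> / (6 * \<gamma>)"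
    using small \<open>0 < \<eta>\<close> assms(5) by (simp add: powr_mult)
  have "e \<le> \<epsilon> / 54"
    using precision_le[OF assms(1-4)] assms(6) by linarith
  then have "(1 + e)\<^sup>2 \<le> (1 + 1 / 108)\<^sup>2"
    using assms(2,5) by (intro power_mono) auto
  also have "\<dots> \<le> 2"
    by (simp add: power2_eq_square)
  finally have "(1 + e)\<^sup>2 * (\<gamma> * ((1 + 1 / \<eta>) powr z * e powr z)) \<le> 2 * (\<gamma> * (\<epsilon> / (6 * \<gamma>)))"
    using K assms(4) by (intro mult_mono) auto
  then show ?thesis
    using assms(4) by simp
qed

lemma cost_rounded_dataset_bounds:
  fixes \<gamma> \<epsilon> z e :: real
  assumes "1 \<le> \<gamma>" "0 < \<epsilon>" "\<epsilon> < 1/2" "1 \<le> z"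
    and w_pos: "\<And>i. i \<in> I \<Longrightarrow> 0 < w i"
    and "finite C'" and approx: "cost d z C' I p w \<le> \<gamma> * opt d z k I p w"
    and nearest: "\<And>i. i \<in> I \<Longrightarrow> cl i \<in> C' \<and> (\<forall>c\<in>C'. edist d (p i) (cl i) \<le> edist d (p i) c)"
    and e: "0 \<le> e" "e \<le> \<epsilon>\<^sup>2 / (54 * \<gamma> * z)"
    and rounded: "\<And>i. i \<in> I \<Longrightarrow> (\<forall>j<d. rounds e (p i j - cl i j) (y i j)) \<and> rounds e (w i) (w' i)"
    and C: "C \<subseteq> Rd d" "finite C" "C \<noteq> {}" "card C \<le> k"
  shows "(1 - \<epsilon>) * cost d z C I p w \<le> cost d z C I (\<lambda>i j. cl i j + y i j) w'"
    and "cost d z C I (\<lambda>i j. cl i j + y i j) w' \<le> (1 + \<epsilon>) * cost d z C I p w"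
proof -
  define \<eta> where "\<eta> = \<epsilon> / (8 * z)"
  define q where "q = (\<lambda>i j. cl i j + y i j)"
  define r where "r i = edist d (p i) (cl i)" for i
  define A where "A = cost d z C I p w"
  define K where "K = (1 + 1 / \<eta>) powr z * e powr z"
  have "0 < \<eta>" "0 \<le> z"
    using assms(2,4) by (simp_all add: \<eta>_def)
  have "K * cost d z C' I p w \<le> K * (\<gamma> * A)"
    unfolding A_def using approx_cost_le[OF approx _ C] assms(1) w_pos
    by (intro mult_left_mono) (auto simp: K_def less_imp_le)
  then have "(1 + e)\<^sup>2 * (K * cost d z C' I p w) \<le> (1 + e)\<^sup>2 * (K * (\<gamma> * A))"
    by (rule mult_left_mono) simp
  moreover have "(1 + 1 / \<eta>) powr z * (\<Sum>i\<in>I. w i * (e * r i) powr z) = K * cost d z C' I p w"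
    unfolding r_def K_def using \<open>finite C'\<close> \<open>0 \<le> z\<close> e(1) nearest by (simp add: sum_scaled_nearest_powr)
  ultimately have "(1 + e)\<^sup>2 * ((1 + 1 / \<eta>) powr z * (\<Sum>i\<in>I. w i * (e * r i) powr z))
      \<le> (1 + e)\<^sup>2 * (\<gamma> * K) * A"
    by (simp only: ac_simps)
  moreover have "0 \<le> r i \<and> edist d (q i) (p i) \<le> e * r i" if "i \<in> I" for i
    unfolding q_def r_def using rounded[OF that] e(1)
    by (auto intro!: edist_add_rounded_offset simp: edist_nonneg)
  moreover have "0 < w i \<and> 0 < w' i \<and> w' i \<le> (1 + e) * w i \<and> w i \<le> (1 + e) * w' i" if "i \<in> I" for i
    using rounds_pos[of e "w i" "w' i"] rounded[OF that] w_pos[OF that] by auto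
  ultimately have "cost d z C I q w' \<le> (1 + e) * (1 + \<eta>) powr z * A + (1 + e)\<^sup>2 * (\<gamma> * K) * A"
    and "A \<le> (1 + e) * (1 + \<eta>) powr z * cost d z C I q w' + (1 + e)\<^sup>2 * (\<gamma> * K) * A"
    using cost_perturbed_bounds[OF C(2,3) \<open>0 < \<eta>\<close> \<open>0 \<le> z\<close> e(1), of I r d q p w w']
    unfolding A_def by fastforce+
  moreover have "e \<le> \<epsilon> / 54"
    using precision_le[OF assms(2,3,4,1)] e(2) by linarith
  then have "(1 + e) * (1 + \<eta>) powr z \<le> 1 + \<epsilon> / 3" "(1 + e)\<^sup>2 * (\<gamma> * K) \<le> \<epsilon> / 3"
    unfolding \<eta>_def K_def using rounding_scale_factor_le rounding_error_factor_le assms(1-4) e by auto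
  moreover have "0 \<le> A"
    unfolding A_def using C(2,3) w_pos by (intro cost_nonneg) (auto simp: less_imp_le)
  ultimately show "(1 - \<epsilon>) * cost d z C I p w \<le> cost d z C I (\<lambda>i j. cl i j + y i j) w'"
    and "cost d z C I (\<lambda>i j. cl i j + y i j) w' \<le> (1 + \<epsilon>) * cost d z C I p w"
    using mutual_perturbation_bounds[of A \<epsilon> "(1 + e) * (1 + \<eta>) powr z" "(1 + e)\<^sup>2 * (\<gamma> * K)"]
      assms(2,3) e(1) \<open>0 < \<eta>\<close> unfolding A_def q_def by simp_all
qed

lemma powr_square_le_square_div:
  fixes \<epsilon> z :: real
  assumes "0 < \<epsilon>" "\<epsilon> \<le> 1/2" "1 \<le> z"
  shows "(\<epsilon> powr z)\<^sup>2 \<le> \<epsilon>\<^sup>2 / z"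
proof -
  have "z \<le> exp (z - 1)"
    using exp_ge_add_one_self[of "z - 1"] by simp
  also have "\<dots> = exp 1 powr (z - 1)"
    by (simp add: exp_powr_real)
  also have "\<dots> \<le> 4 powr (z - 1)"
    using exp_le assms(3) by (intro powr_mono2) auto
  finally have z4: "z \<le> 4 powr (z - 1)" .
  have "(\<epsilon> powr z)\<^sup>2 = \<epsilon> powr 2 * (\<epsilon> powr 2) powr (z - 1)"
    by (simp add: powr_powr powr_add[symmetric] power2_eq_square algebra_simps)
  also have "\<dots> = \<epsilon>\<^sup>2 * (\<epsilon>\<^sup>2) powr (z - 1)"
    using assms(1) by simp
  also have "\<dots> \<le> \<epsilon>\<^sup>2 * (1 / 2)\<^sup>2 powr (z - 1)"
    using assms by (intro mult_left_mono powr_mono2 power_mono) auto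
  also have "\<dots> \<le> \<epsilon>\<^sup>2 / z"
    using z4 assms(3) by (simp add: powr_divide divide_simps mult_left_mono)
  finally show ?thesis .
qed

lemma finite_grid: "finite (grid d \<Delta>)"
proof (rule finite_subset)
  show "grid d \<Delta> \<subseteq> {x. \<forall>i. (i \<in> {..<d} \<longrightarrow> x i \<in> real ` {1..\<Delta>}) \<and> (i \<notin> {..<d} \<longrightarrow> x i = 0)}"
  proof (intro subsetI CollectI allI conjI impI)
    fix x i assume x: "x \<in> grid d \<Delta>"
    then show "i \<notin> {..<d} \<Longrightarrow> x i = 0"
      by (simp add: grid_def)
    assume "i \<in> {..<d}"
    then have xi: "x i \<in> \<int>" "1 \<le> x i" "x i \<le> real \<Delta>"
      using x by (auto simp: grid_def)
    then obtain m where "x i = of_int m"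
      by (auto elim: Ints_cases)
    with xi have "x i = real (nat m)" "nat m \<in> {1..\<Delta>}"
      by auto
    then show "x i \<in> real ` {1..\<Delta>}"
      by blast
  qed
qed (intro finite_set_of_finite_funs; simp)

lemma grid_subset_Rd: "grid d \<Delta> \<subseteq> Rd d"
  by (auto simp: grid_def Rd_def)

theorem lemma2p6:
  fixes \<gamma> :: real
  assumes "\<gamma> \<ge> 1"
  shows "\<exists>c>0. \<exists>a b :: nat. \<forall>(\<epsilon>::real) (z::real) (d::nat) (\<Delta>::nat) (k::nat) (I::nat set)
      (p::nat \<Rightarrow> nat \<Rightarrow> real) (w::nat \<Rightarrow> real) (C'::(nat \<Rightarrow> real) set) (cl::nat \<Rightarrow> nat \<Rightarrow> real)
      (e::real) (y::nat \<Rightarrow> nat \<Rightarrow> real) (w'::nat \<Rightarrow> real).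
    0 < \<epsilon> \<and> \<epsilon> < 1/2 \<and> z \<ge> 1 \<and> d \<ge> 1 \<and> \<Delta> \<ge> 1 \<and> k \<ge> 1 \<and> finite I \<and> I \<noteq> {} \<and>
    (\<forall>i\<in>I. p i \<in> grid d \<Delta> \<and> w i > 0) \<and>
    C' \<subseteq> Rd d \<and> finite C' \<and> card C' = k \<and>
    cost d z C' I p w \<le> \<gamma> * opt d z k I p w \<and>
    (\<forall>i\<in>I. cl i \<in> C' \<and> (\<forall>c\<in>C'. edist d (p i) (cl i) \<le> edist d (p i) c)) \<and>
    e = c * (\<epsilon> powr z) ^ a / (real k * (1 + ln (real (card I * d * \<Delta>)))) ^ b \<and>
    (\<forall>i\<in>I. (\<forall>j<d. rounds e (p i j - cl i j) (y i j)) \<and> (\<forall>j\<ge>d. y i j = 0) \<and> rounds e (w i) (w' i))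
    \<longrightarrow> (\<forall>C. C \<subseteq> grid d \<Delta> \<and> C \<noteq> {} \<and> card C \<le> k \<longrightarrow>
          (1 - \<epsilon>) * cost d z C I p w \<le> cost d z C I (\<lambda>i j. cl i j + y i j) w' \<and>
          cost d z C I (\<lambda>i j. cl i j + y i j) w' \<le> (1 + \<epsilon>) * cost d z C I p w)"
proof -
  define c where "c = 1 / (54 * \<gamma>)"
  show ?thesis
  proof (rule exI[of _ c], rule conjI[rotated], rule exI[of _ 2], rule exI[of _ 0], intro allI impI,
      goal_cases)
    case (1 \<epsilon> z d \<Delta> k I p w C' cl e y w' C)
    then have "e = (\<epsilon> powr z)\<^sup>2 / (54 * \<gamma>)"
      by (simp add: c_def)
    also have "\<dots> \<le> \<epsilon>\<^sup>2 / (54 * \<gamma> * z)"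
      using 1 powr_square_le_square_div[of \<epsilon> z] assms
      by (simp add: divide_right_mono mult.commute[of _ z] flip: divide_divide_eq_left)
    finally have "e \<le> \<epsilon>\<^sup>2 / (54 * \<gamma> * z)" .
    moreover have "C \<subseteq> Rd d" "finite C"
      using 1 grid_subset_Rd finite_grid finite_subset by blast+
    ultimately show ?case
      using 1 assms by (intro conjI cost_rounded_dataset_bounds[where \<gamma> = \<gamma> and C' = C']) (auto simp: c_def)
  next
    case 2
    show ?case using assms by (simp add: c_def)
  qed
qed

end
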